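(* Let $N_i\ge1$ and, for $j=1,\ldots,N_i$, let $\lambda_{ij}>0$ and $\delta_{ij}\ge0$ with $\lambda_{ij}\delta_{ij}<1$; let $\Delta_i=\sum_{j=1}^{N_i}\delta_{ij}>0$. Consider a CTMC fragment consisting of states $z_{i1},\ldots,z_{ik_i}$ followed by states $s'_{i1},\ldots,s'_{iN_i}$, in which $z_{il}$ transitions to $z_{i,l+1}$ ($l<k_i$) and $z_{ik_i}$ transitions to $s'_{i1}$, each with rate $\lambda_i^E$, and $s'_{ij}$ is left with total rate $\lambda'_{ij}$ (to $s'_{i,j+1}$ for $j<N_i$). Let $\epsilon\in(0,1)$. If $k_i$, $\lambda_i^E$ and $\lambda'_{i1},\ldots,\lambda'_{iN_i}$ satisfy, for some $p\in(0,1)$, (a) $1-\sum_{l=0}^{k_i-1}\frac{(k_i(1-\epsilon))^l e^{-k_i(1-\epsilon)}}{l!}=p$, (b) $\lambda_i^E=k_i/\Delta_i$, (c) $\lambda'_{ij}=\frac{\lambda_{ij}}{1-\lambda_{ij}\delta_{ij}}$ for all $j\in\{1,\ldots,N_i\}$, then: (i) the probability that the CTMC leaves state $z_{ik_i}$ within $\Delta_i(1-\epsilon)$ time units from entering state $z_{i1}$ is $p$; (ii) the expected time for the CTMC to leave $s'_{iN_i}$ after entering $z_{i1}$ is $\sum_{j=1}^{N_i}\lambda_{ij}^{-1}$, which equals the expected time to traverse a sequence of states $s_{i1},\ldots,s_{iN_i}$ with exponential sojourn times of rates $\lambda_{i1},\ldots,\lambda_{iN_i}$.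
   Context: In the paper, $\lambda_{ij}$ is the reciprocal of the mean of the observed execution times of the component associated with high-level CTMC state $s_{ij}$, and $\delta_{ij}$ (its delay) is the minimum observed execution time of that component; the states $s_{i1},\ldots,s_{iN_i}$ form a sequence of high-level states always traversed consecutively, and $\Delta_i$ is their joint delay. The states $z_{i1},\ldots,z_{ik_i}$ encode an Erlang-$k_i$ distribution with rate $\lambda_i^E$ (CDF $F(k,\lambda,x)=1-\sum_{l=0}^{k-1}\frac{(\lambda x)^l}{l!}e^{-\lambda x}$). *)

theory Defs
  imports "HOL-Probability.Probability"
begin

end

theory Submission
  imports Defs
begin

text \<open>The Erlang-\<open>k\<close> phase \<open>z\<^sub>1, \<dots>, z\<^sub>k\<close> with rate \<open>k / \<Delta>\<close> has mean \<open>\<Delta>\<close>, so it absorbs exactly the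
  joint delay; its sojourn time is a sum of \<open>k\<close> independent exponentials, hence Erlang distributed,
  which yields (i). The rates \<open>\<lambda>' = \<lambda> / (1 - \<lambda> \<delta>)\<close> have means \<open>1/\<lambda> - \<delta>\<close>, so by linearity of
  expectation the whole fragment has mean \<open>\<Delta> + \<Sum>(1/\<lambda>\<^sub>j - \<delta>\<^sub>j) = \<Sum> 1/\<lambda>\<^sub>j\<close>, which is also the mean of
  the original sequence of exponential sojourns; this is (ii).\<close>

lemma (in prob_space) indep_sets_reindex:
  assumes indep: "indep_sets F (f ` I)" and inj: "inj_on f I"
  shows "indep_sets (\<lambda>i. F (f i)) I"
proof (rule indep_setsI)
  fix i assume "i \<in> I"
  then show "F (f i) \<subseteq> events"
    using indep by (auto simp: indep_sets_def)
next
  fix A J assume J: "J \<noteq> {}" "J \<subseteq> I" "finite J" and A: "\<forall>j\<in>J. A j \<in> F (f j)"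
  let ?B = "\<lambda>x. A (the_inv_into I f x)"
  have inv: "the_inv_into I f (f j) = j" if "j \<in> J" for j
    using J(2) inj that by (auto intro: the_inv_into_f_f)
  have "prob (\<Inter>x\<in>f ` J. ?B x) = (\<Prod>x\<in>f ` J. prob (?B x))"
    by (rule indep_setsD[OF indep]) (use J A inv in auto)
  moreover have "inj_on f J"
    using inj J(2) by (rule inj_on_subset)
  ultimately show "prob (\<Inter>j\<in>J. A j) = (\<Prod>j\<in>J. prob (A j))"
    by (simp add: prod.reindex image_image inv cong: INF_cong prod.cong)
qed

lemma (in prob_space) indep_vars_reindex:
  assumes "indep_vars M' X (f ` I)" and "inj_on f I"
  shows "indep_vars (\<lambda>i. M' (f i)) (\<lambda>i. X (f i)) I"
  using assms unfolding indep_vars_def by (auto intro: indep_sets_reindex)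

lemma (in prob_space) indep_vars_Inl:
  assumes "indep_vars M' (case_sum X Y) (I <+> J)"
  shows "indep_vars (\<lambda>i. M' (Inl i)) X I"
proof -
  have "indep_vars M' (case_sum X Y) (Inl ` I)"
    by (rule indep_vars_subset[OF assms]) auto
  then show ?thesis
    using indep_vars_reindex[of M' "case_sum X Y" Inl I] by simp
qed

lemma (in prob_space) prob_sum_exponential_le:
  assumes I: "finite I" "I \<noteq> {}" and "0 < l" "0 \<le> t"
    and distr: "\<And>i. i \<in> I \<Longrightarrow> distributed M lborel (X i) (exponential_density l)"
    and indep: "indep_vars (\<lambda>_. borel) X I"
  shows "prob {\<omega> \<in> space M. (\<Sum>i\<in>I. X i \<omega>) \<le> t}
    = 1 - (\<Sum>n<card I. (l * t) ^ n * exp (- (l * t)) / fact n)"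
proof -
  have "distributed M lborel (\<lambda>\<omega>. \<Sum>i\<in>I. X i \<omega>) (erlang_density (card I - 1) l)"
    by (rule exponential_distributed_sum[OF I \<open>0 < l\<close> distr indep])
  then have "prob {\<omega> \<in> space M. (\<Sum>i\<in>I. X i \<omega>) \<le> t} = erlang_CDF (card I - 1) l t"
    using \<open>0 < l\<close> \<open>0 \<le> t\<close> by (rule erlang_distributed_le)
  also have "\<dots> = 1 - (\<Sum>n<card I. (l * t) ^ n * exp (- (l * t)) / fact n)"
  proof -
    have "0 < card I"
      using I by (simp add: card_gt_0_iff)
    then have "{..card I - 1} = {..<card I}"
      by auto
    then show ?thesis
      using \<open>0 \<le> t\<close> by (simp add: erlang_CDF_def)
  qed
  finally show ?thesis .
qed

lemma (in prob_space) exponential_distributed_integrable: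
  "0 < l \<Longrightarrow> distributed M lborel X (exponential_density l) \<Longrightarrow> integrable M X"
  using erlang_ith_moment_integrable[of l X 0 1] by simp

lemma (in prob_space) integrable_sum_exponential:
  assumes "\<And>i. i \<in> I \<Longrightarrow> 0 < l i"
    and "\<And>i. i \<in> I \<Longrightarrow> distributed M lborel (X i) (exponential_density (l i))"
  shows "integrable M (\<lambda>\<omega>. \<Sum>i\<in>I. X i \<omega>)"
  using assms by (intro Bochner_Integration.integrable_sum exponential_distributed_integrable)

lemma (in prob_space) expectation_sum_exponential:
  assumes l: "\<And>i. i \<in> I \<Longrightarrow> 0 < l i"
    and distr: "\<And>i. i \<in> I \<Longrightarrow> distributed M lborel (X i) (exponential_density (l i))"
  shows "expectation (\<lambda>\<omega>. \<Sum>i\<in>I. X i \<omega>) = (\<Sum>i\<in>I. 1 / l i)"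
proof -
  have "expectation (\<lambda>\<omega>. \<Sum>i\<in>I. X i \<omega>) = (\<Sum>i\<in>I. expectation (X i))"
    using l distr by (intro Bochner_Integration.integral_sum exponential_distributed_integrable)
  also have "\<dots> = (\<Sum>i\<in>I. 1 / l i)"
    using l distr by (intro sum.cong exponential_distributed_expectation) auto
  finally show ?thesis .
qed

lemma (in prob_space) expectation_sum_exponential_compensated:
  assumes l: "\<And>i. i \<in> I \<Longrightarrow> 0 < l i"
    and r: "\<And>i. i \<in> I \<Longrightarrow> r i = l i / (1 - l i * d i)"
    and r_pos: "\<And>i. i \<in> I \<Longrightarrow> 0 < r i"
    and distr: "\<And>i. i \<in> I \<Longrightarrow> distributed M lborel (X i) (exponential_density (r i))"
  shows "expectation (\<lambda>\<omega>. \<Sum>i\<in>I. X i \<omega>) = (\<Sum>i\<in>I. 1 / l i) - (\<Sum>i\<in>I. d i)"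
proof -
  have "expectation (\<lambda>\<omega>. \<Sum>i\<in>I. X i \<omega>) = (\<Sum>i\<in>I. 1 / r i)"
    using r_pos distr by (rule expectation_sum_exponential)
  also have "\<dots> = (\<Sum>i\<in>I. 1 / l i - d i)"
  proof (rule sum.cong)
    fix i assume i: "i \<in> I"
    show "1 / r i = 1 / l i - d i"
      unfolding r[OF i] using l[OF i] by (simp add: field_simps)
  qed simp
  finally show ?thesis
    by (simp add: sum_subtractf)
qed

theorem theorem4:
  fixes M :: "'a measure"
    and N k :: nat
    and lam del lam' :: "nat \<Rightarrow> real"
    and Delta lamE eps p :: real
    and Z S' U :: "nat \<Rightarrow> 'a \<Rightarrow> real"
  assumes "prob_space M"
    and N_pos: "N \<ge> 1"
    and k_pos: "k \<ge> 1"
    and lam_pos: "\<And>j. j \<in> {1..N} \<Longrightarrow> lam j > 0"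
    and del_nn: "\<And>j. j \<in> {1..N} \<Longrightarrow> del j \<ge> 0"
    and lamdel: "\<And>j. j \<in> {1..N} \<Longrightarrow> lam j * del j < 1"
    and Delta_def: "Delta = (\<Sum>j=1..N. del j)"
    and Delta_pos: "Delta > 0"
    and eps: "0 < eps" "eps < 1"
    and p: "0 < p" "p < 1"
    and cond_a: "1 - (\<Sum>l<k. (real k * (1 - eps)) ^ l * exp (- (real k * (1 - eps))) / fact l) = p"
    and cond_b: "lamE = real k / Delta"
    and cond_c: "\<And>j. j \<in> {1..N} \<Longrightarrow> lam' j = lam j / (1 - lam j * del j)"
    \<comment> \<open>sojourn times of the CTMC fragment z_1..z_k, s'_1..s'_N: independent exponentials\<close>
    and Z_distr: "\<And>l. l \<in> {1..k} \<Longrightarrow> distributed M lborel (Z l) (exponential_density lamE)"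
    and S'_distr: "\<And>j. j \<in> {1..N} \<Longrightarrow> distributed M lborel (S' j) (exponential_density (lam' j))"
    and indep: "prob_space.indep_vars M (\<lambda>_. borel) (case_sum Z S') ({1..k} <+> {1..N})"
    \<comment> \<open>sojourn times of the original sequence s_1..s_N: independent exponentials with rates lam j\<close>
    and U_distr: "\<And>j. j \<in> {1..N} \<Longrightarrow> distributed M lborel (U j) (exponential_density (lam j))"
    and U_indep: "prob_space.indep_vars M (\<lambda>_. borel) U {1..N}"
  shows "measure M {\<omega> \<in> space M. (\<Sum>l=1..k. Z l \<omega>) \<le> Delta * (1 - eps)} = p
     \<and> prob_space.expectation M (\<lambda>\<omega>. (\<Sum>l=1..k. Z l \<omega>) + (\<Sum>j=1..N. S' j \<omega>)) = (\<Sum>j=1..N. 1 / lam j)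
     \<and> prob_space.expectation M (\<lambda>\<omega>. \<Sum>j=1..N. U j \<omega>) = (\<Sum>j=1..N. 1 / lam j)"
proof -
  interpret prob_space M by fact
  have lamE_pos: "0 < lamE" using cond_b k_pos Delta_pos by simp
  have lam'_pos: "0 < lam' j" if "j \<in> {1..N}" for j
    using cond_c[OF that] lam_pos[OF that] lamdel[OF that] by simp
  have "prob {\<omega> \<in> space M. (\<Sum>l=1..k. Z l \<omega>) \<le> Delta * (1 - eps)}
      = 1 - (\<Sum>n<card {1..k}. (lamE * (Delta * (1 - eps))) ^ n
               * exp (- (lamE * (Delta * (1 - eps)))) / fact n)"
    by (rule prob_sum_exponential_le[OF _ _ lamE_pos _ Z_distr indep_vars_Inl[OF indep]])
      (use k_pos Delta_pos eps in auto)
  also have "lamE * (Delta * (1 - eps)) = real k * (1 - eps)"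
    using cond_b Delta_pos by simp
  finally have "prob {\<omega> \<in> space M. (\<Sum>l=1..k. Z l \<omega>) \<le> Delta * (1 - eps)} = p"
    using cond_a by simp
  moreover have "expectation (\<lambda>\<omega>. \<Sum>l=1..k. Z l \<omega>) = Delta"
    using expectation_sum_exponential[of "{1..k}" "\<lambda>_. lamE"] lamE_pos Z_distr cond_b k_pos by simp
  moreover have "expectation (\<lambda>\<omega>. \<Sum>j=1..N. S' j \<omega>) = (\<Sum>j=1..N. 1 / lam j) - Delta"
    unfolding Delta_def using lam_pos cond_c lam'_pos S'_distr
    by (rule expectation_sum_exponential_compensated)
  moreover have "integrable M (\<lambda>\<omega>. \<Sum>l=1..k. Z l \<omega>)"
    using lamE_pos Z_distr by (rule integrable_sum_exponential)
  moreover have "integrable M (\<lambda>\<omega>. \<Sum>j=1..N. S' j \<omega>)"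
    using lam'_pos S'_distr by (rule integrable_sum_exponential)
  moreover have "expectation (\<lambda>\<omega>. \<Sum>j=1..N. U j \<omega>) = (\<Sum>j=1..N. 1 / lam j)"
    using lam_pos U_distr by (rule expectation_sum_exponential)
  ultimately show ?thesis
    by simp
qed

end
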